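(* In any finite discounted stochastic game and for any $\bm{\Lambda}=(\Lambda^1,\dots,\Lambda^N)\in\mathbb{R}^N$: (i) for every $\bm{\pi}\in\bm{\Pi}$, $\bm{\pi}\in\bm{\Pi}_{\rm eq}$ if and only if $\{\bm{\pi}\}$ is a minimal cumber set; (ii) for every $\bm{\pi}\in\bm{\Pi}\setminus\bm{\Pi}^{\bm{\Lambda}}_{\rm cumber}$ there is a multi-DM strict best reply path starting at $\bm{\pi}$ and ending in $\bm{\Pi}^{\bm{\Lambda}}_{\rm cumber}$.
   Context: Game setup: finite discounted stochastic game with $N$ decision makers, finite state set $\mathbb{X}$, finite action sets $\mathbb{U}^i$, discount factors $\beta^i\in(0,1)$, costs $c^i:\mathbb{X}\times\mathbb{U}\to\mathbb{R}$, transition kernel $P$. $\Pi^i$ = set of maps $\mathbb{X}\to\mathbb{U}^i$, $\bm{\Pi}=\times_i\Pi^i$; $J^i_x(\bm{\pi})=E[\sum_{t\ge0}(\beta^i)^tc^i(x_t,\bm{\pi}(x_t))\mid x_0=x]$ with $x_{t+1}\sim P(\cdot\mid x_t,\bm{\pi}(x_t))$; $\tilde S^i(\bm{\pi})=\sum_{x\in\mathbb{X}}J^i_x(\bm{\pi})$. Best reply, strict best reply with respect to $\bm{\pi}$ (a best reply to $\bm{\pi}^{-i}$ with strictly smaller $J^i_x$ than $\pi^i$ at some $x$), $\bm{\Pi}_{\rm eq}$ (all DMs best-replying), multi-DM strict best reply path (consecutive elements differ, and every DM that changes switches to a strict best reply with respect to the previous joint policy), $\widetilde{BR}(\bm{\pi})$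 and cumber sets are as follows: $\widetilde{BR}(\bm{\pi})=\{\tilde{\bm{\pi}}:\forall i,\ \tilde\pi^i\ne\pi^i\Rightarrow\tilde\pi^i$ strict best reply with respect to $\bm{\pi}\}$; a nonempty $\tilde{\bm{\Pi}}$ is a cumber set if $\bm{\pi}\in\tilde{\bm{\Pi}}\Rightarrow\widetilde{BR}(\bm{\pi})\subseteq\tilde{\bm{\Pi}}$, minimal if it properly contains no cumber set. Further, $\widetilde{BR}^{\bm{\Lambda}}(\bm{\pi})=\{\tilde{\bm{\pi}}\in\bm{\Pi}:\forall i,\ \tilde\pi^i\ne\pi^i\Rightarrow(\tilde S^i(\bm{\pi})>\Lambda^i$ and $\tilde\pi^i$ is a strict best reply with respect to $\bm{\pi})\}$; a nonempty $\tilde{\bm{\Pi}}\subseteq\bm{\Pi}$ is a $\bm{\Lambda}$-cumber set if $\bm{\pi}\in\tilde{\bm{\Pi}}\Rightarrow\widetilde{BR}^{\bm{\Lambda}}(\bm{\pi})\subseteq\tilde{\bm{\Pi}}$, minimal if it properly contains no other $\bm{\Lambda}$-cumber set; $\bm{\Pi}^{\bm{\Lambda}}_{\rm cumber}$ is the union of all minimal $\bm{\Lambda}$-cumber sets. *)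

theory Defs
  imports "HOL-Analysis.Analysis"
begin

text \<open>Finite discounted stochastic game.
  'i : decision makers (finite type), 'x : states (finite type), 'a : ambient action type;
  A i : finite action set of DM i; a joint action is a map u :: 'i \<Rightarrow> 'a with u i \<in> A i.
  beta i : discount factor; c i x u : cost of DM i; P x u y : transition probability.
  A joint (stationary deterministic) policy is sg :: 'i \<Rightarrow> 'x \<Rightarrow> 'a, sg i being the policy of DM i.\<close>

definition joint_actions :: "('i \<Rightarrow> 'a set) \<Rightarrow> ('i \<Rightarrow> 'a) set" where
  "joint_actions A = {u. \<forall>i. u i \<in> A i}"

definition is_game ::
  "('i::finite \<Rightarrow> 'a::finite set) \<Rightarrow> ('i \<Rightarrow> real) \<Rightarrow> ('x::finite \<Rightarrow> ('i \<Rightarrow> 'a) \<Rightarrow> 'x \<Rightarrow> real) \<Rightarrow> bool" where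
  "is_game A beta P \<longleftrightarrow>
     (\<forall>i. A i \<noteq> {}) \<and> (\<forall>i. 0 < beta i \<and> beta i < 1) \<and>
     (\<forall>x. \<forall>u\<in>joint_actions A. (\<forall>y. 0 \<le> P x u y) \<and> (\<Sum>y\<in>UNIV. P x u y) = 1)"

definition Pol :: "('i \<Rightarrow> 'a set) \<Rightarrow> 'i \<Rightarrow> ('x \<Rightarrow> 'a) set" where
  "Pol A i = {p. \<forall>x. p x \<in> A i}"

definition JPol :: "('i \<Rightarrow> 'a set) \<Rightarrow> ('i \<Rightarrow> 'x \<Rightarrow> 'a) set" where
  "JPol A = {sg. \<forall>i. sg i \<in> Pol A i}"

definition jact :: "('i \<Rightarrow> 'x \<Rightarrow> 'a) \<Rightarrow> 'x \<Rightarrow> ('i \<Rightarrow> 'a)" where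
  "jact sg x = (\<lambda>j. sg j x)"

fun tprob :: "('x::finite \<Rightarrow> ('i \<Rightarrow> 'a) \<Rightarrow> 'x \<Rightarrow> real) \<Rightarrow> ('i \<Rightarrow> 'x \<Rightarrow> 'a) \<Rightarrow> nat \<Rightarrow> 'x \<Rightarrow> 'x \<Rightarrow> real" where
  "tprob P sg 0 x y = (if x = y then 1 else 0)"
| "tprob P sg (Suc t) x y = (\<Sum>z\<in>UNIV. tprob P sg t x z * P z (jact sg z) y)"

definition Jc ::
  "('i \<Rightarrow> real) \<Rightarrow> ('i \<Rightarrow> 'x \<Rightarrow> ('i \<Rightarrow> 'a) \<Rightarrow> real) \<Rightarrow> ('x::finite \<Rightarrow> ('i \<Rightarrow> 'a) \<Rightarrow> 'x \<Rightarrow> real)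
     \<Rightarrow> 'i \<Rightarrow> ('i \<Rightarrow> 'x \<Rightarrow> 'a) \<Rightarrow> 'x \<Rightarrow> real" where
  "Jc beta c P i sg x = (\<Sum>t. beta i ^ t * (\<Sum>y\<in>UNIV. tprob P sg t x y * c i y (jact sg y)))"

definition Stilde ::
  "('i \<Rightarrow> real) \<Rightarrow> ('i \<Rightarrow> 'x \<Rightarrow> ('i \<Rightarrow> 'a) \<Rightarrow> real) \<Rightarrow> ('x::finite \<Rightarrow> ('i \<Rightarrow> 'a) \<Rightarrow> 'x \<Rightarrow> real)
     \<Rightarrow> 'i \<Rightarrow> ('i \<Rightarrow> 'x \<Rightarrow> 'a) \<Rightarrow> real" where
  "Stilde beta c P i sg = (\<Sum>x\<in>UNIV. Jc beta c P i sg x)"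

definition best_reply where
  "best_reply A beta c P i sg p \<longleftrightarrow> p \<in> Pol A i \<and>
     (\<forall>q\<in>Pol A i. \<forall>x. Jc beta c P i (sg(i := p)) x \<le> Jc beta c P i (sg(i := q)) x)"

definition strict_best_reply where
  "strict_best_reply A beta c P i sg p \<longleftrightarrow> best_reply A beta c P i sg p \<and>
     (\<exists>x. Jc beta c P i (sg(i := p)) x < Jc beta c P i sg x)"

definition Peq where
  "Peq A beta c P = {sg \<in> JPol A. \<forall>i. best_reply A beta c P i sg (sg i)}"

definition BRt where
  "BRt A beta c P sg = {sg' \<in> JPol A. \<forall>i. sg' i \<noteq> sg i \<longrightarrow> strict_best_reply A beta c P i sg (sg' i)}"

definition cumber where
  "cumber A beta c P T \<longleftrightarrow> T \<noteq> {} \<and> T \<subseteq> JPol A \<and> (\<forall>sg\<in>T. BRt A beta c P sg \<subseteq> T)"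

definition min_cumber where
  "min_cumber A beta c P T \<longleftrightarrow> cumber A beta c P T \<and> \<not> (\<exists>T'. T' \<subset> T \<and> cumber A beta c P T')"

definition BRt_L where
  "BRt_L A beta c P L sg = {sg' \<in> JPol A. \<forall>i. sg' i \<noteq> sg i \<longrightarrow>
      (Stilde beta c P i sg > L i \<and> strict_best_reply A beta c P i sg (sg' i))}"

definition L_cumber where
  "L_cumber A beta c P L T \<longleftrightarrow> T \<noteq> {} \<and> T \<subseteq> JPol A \<and> (\<forall>sg\<in>T. BRt_L A beta c P L sg \<subseteq> T)"

definition min_L_cumber where
  "min_L_cumber A beta c P L T \<longleftrightarrow> L_cumber A beta c P L T \<and> \<not> (\<exists>T'. T' \<subset> T \<and> L_cumber A beta c P L T')"

definition Pcumber_L where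
  "Pcumber_L A beta c P L = \<Union>{T. min_L_cumber A beta c P L T}"

definition sbr_path where
  "sbr_path A beta c P ps \<longleftrightarrow> ps \<noteq> [] \<and> set ps \<subseteq> JPol A \<and>
     (\<forall>k. Suc k < length ps \<longrightarrow> ps ! Suc k \<noteq> ps ! k \<and> ps ! Suc k \<in> BRt A beta c P (ps ! k))"

end

theory Submission
  imports Defs
begin

text \<open>
  A singleton is automatically minimal, so \<open>{\<pi>}\<close> is a minimal cumber
  set iff \<open>\<pi>\<close> admits no strict best reply. At an equilibrium no DM can strictly improve. Conversely,
  a DM that is not best replying has some best reply (by the policy-improvement argument for the
  discounted Markov decision problem it faces), and that reply is strict.

  Part (ii) is pure combinatorics on the finite set of joint policies: the set of policies reachable
  from \<open>\<pi>\<close> by \<open>\<Lambda>\<close>-restricted strict best reply steps is a \<open>\<Lambda>\<close>-cumber set, a \<open>\<Lambda>\<close>-cumber subset of least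
  cardinality inside it is minimal, and the steps leading to it form a strict best reply path.
\<close>

subsection \<open>Discounted values of a stationary policy\<close>

definition stochastic :: "('x::finite \<Rightarrow> ('i \<Rightarrow> 'a) \<Rightarrow> 'x \<Rightarrow> real) \<Rightarrow> ('i \<Rightarrow> 'x \<Rightarrow> 'a) \<Rightarrow> bool" where
  "stochastic P sg \<longleftrightarrow> (\<forall>z. (\<forall>y. 0 \<le> P z (jact sg z) y) \<and> (\<Sum>y\<in>UNIV. P z (jact sg z) y) = 1)"

definition discounted_value ::
  "('x::finite \<Rightarrow> ('i \<Rightarrow> 'a) \<Rightarrow> 'x \<Rightarrow> real) \<Rightarrow> ('i \<Rightarrow> 'x \<Rightarrow> 'a) \<Rightarrow> real \<Rightarrow> ('x \<Rightarrow> real) \<Rightarrow> 'x \<Rightarrow> real" where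
  "discounted_value P sg b r x = (\<Sum>t. b ^ t * (\<Sum>y\<in>UNIV. tprob P sg t x y * r y))"

lemma tprob_nonneg: "stochastic P sg \<Longrightarrow> 0 \<le> tprob P sg t x y"
  by (induction t arbitrary: y) (auto simp: stochastic_def intro!: sum_nonneg)

lemma sum_tprob: "stochastic P sg \<Longrightarrow> (\<Sum>y\<in>UNIV. tprob P sg t x y) = 1"
proof (induction t)
  case 0
  then show ?case by simp
next
  case (Suc t)
  have "(\<Sum>y\<in>UNIV. tprob P sg (Suc t) x y)
      = (\<Sum>z\<in>UNIV. tprob P sg t x z * (\<Sum>y\<in>UNIV. P z (jact sg z) y))"
    by (simp add: sum_distrib_left) (rule sum.swap)
  also have "\<dots> = 1"
    using Suc by (simp add: stochastic_def)
  finally show ?case .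
qed

lemma tprob_le_1: "stochastic P sg \<Longrightarrow> tprob P sg t x y \<le> 1"
  using member_le_sum[of y UNIV "tprob P sg t x"] by (simp add: tprob_nonneg sum_tprob)

text \<open>\<open>tprob\<close> is defined by extending paths at the end; this is the first-step decomposition.\<close>
lemma tprob_Suc_first_step:
  "tprob P sg (Suc t) x y = (\<Sum>z\<in>UNIV. P x (jact sg x) z * tprob P sg t z y)"
proof (induction t arbitrary: y)
  case 0
  show ?case
    by (simp add: if_distrib[of "\<lambda>v. v * _"] if_distrib[of "\<lambda>v. _ * v"] cong: if_cong)
next
  case (Suc t)
  have "tprob P sg (Suc (Suc t)) x y
      = (\<Sum>z\<in>UNIV. (\<Sum>w\<in>UNIV. P x (jact sg x) w * tprob P sg t w z) * P z (jact sg z) y)"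
    using Suc by simp
  also have "\<dots> = (\<Sum>w\<in>UNIV. P x (jact sg x) w * (\<Sum>z\<in>UNIV. tprob P sg t w z * P z (jact sg z) y))"
    by (simp add: sum_distrib_left sum_distrib_right mult.assoc) (rule sum.swap)
  finally show ?case by simp
qed

lemma summable_discounted_value:
  fixes r :: "'x::finite \<Rightarrow> real"
  assumes "stochastic P sg" and "\<bar>b\<bar> < 1"
  shows "summable (\<lambda>t. b ^ t * (\<Sum>y\<in>UNIV. tprob P sg t x y * r y))"
proof (rule summable_comparison_test)
  define B where "B = (\<Sum>y\<in>UNIV. \<bar>r y\<bar>)"
  have "\<bar>\<Sum>y\<in>UNIV. tprob P sg t x y * r y\<bar> \<le> B" for t
  proof -
    have "\<bar>\<Sum>y\<in>UNIV. tprob P sg t x y * r y\<bar> \<le> (\<Sum>y\<in>UNIV. \<bar>tprob P sg t x y * r y\<bar>)"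
      by (rule sum_abs)
    also have "\<dots> \<le> B"
      unfolding B_def using assms(1)
      by (intro sum_mono) (auto simp: abs_mult tprob_nonneg tprob_le_1 intro!: mult_left_le_one_le)
    finally show ?thesis .
  qed
  then show "\<exists>N. \<forall>t\<ge>N. norm (b ^ t * (\<Sum>y\<in>UNIV. tprob P sg t x y * r y)) \<le> B * \<bar>b\<bar> ^ t"
    by (auto simp: abs_mult power_abs mult.commute[of "\<bar>b\<bar> ^ _"] intro!: mult_right_mono)
  show "summable (\<lambda>t. B * \<bar>b\<bar> ^ t)"
    using assms(2) by (intro summable_mult summable_geometric) simp
qed

lemma discounted_value_bellman:
  fixes r :: "'x::finite \<Rightarrow> real"
  assumes st: "stochastic P sg" and b: "\<bar>b\<bar> < 1"
  shows "discounted_value P sg b r x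
       = r x + b * (\<Sum>z\<in>UNIV. P x (jact sg x) z * discounted_value P sg b r z)"
proof -
  define f where "f t x = (\<Sum>y\<in>UNIV. tprob P sg t x y * r y)" for t x
  let ?p = "P x (jact sg x)"
  have sm: "summable (\<lambda>t. b ^ t * f t z)" for z
    unfolding f_def by (rule summable_discounted_value[OF st b])
  have f_Suc: "f (Suc t) x = (\<Sum>z\<in>UNIV. ?p z * f t z)" for t
    unfolding f_def tprob_Suc_first_step
    by (simp add: sum_distrib_left sum_distrib_right mult.assoc) (rule sum.swap)
  have "(\<Sum>t. b ^ t * f t x) = (\<Sum>t. b ^ Suc t * f (Suc t) x) + f 0 x"
    using suminf_split_head[OF sm[of x]] by simp
  also have "f 0 x = r x"
    by (simp add: f_def if_distrib[of "\<lambda>v. v * _"] cong: if_cong)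
  also have "(\<Sum>t. b ^ Suc t * f (Suc t) x) = (\<Sum>t. b * (\<Sum>z\<in>UNIV. ?p z * (b ^ t * f t z)))"
    by (simp add: f_Suc sum_distrib_left mult_ac)
  also have "\<dots> = b * (\<Sum>t. \<Sum>z\<in>UNIV. ?p z * (b ^ t * f t z))"
    by (rule suminf_mult) (intro summable_sum summable_mult sm)
  also have "(\<Sum>t. \<Sum>z\<in>UNIV. ?p z * (b ^ t * f t z)) = (\<Sum>z\<in>UNIV. \<Sum>t. ?p z * (b ^ t * f t z))"
    by (rule suminf_sum) (intro summable_mult sm)
  also have "\<dots> = (\<Sum>z\<in>UNIV. ?p z * (\<Sum>t. b ^ t * f t z))"
    by (intro sum.cong refl) (simp add: suminf_mult sm)
  finally show ?thesis
    unfolding discounted_value_def f_def by simp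
qed

text \<open>Maximum principle: at a maximiser of \<open>w\<close> the averaged value is at most \<open>max w\<close>, forcing \<open>max w \<le> b max w\<close>.\<close>
lemma nonpos_if_discounted_subsolution:
  fixes w :: "'x::finite \<Rightarrow> real"
  assumes st: "stochastic P sg" and b: "0 \<le> b" "b < 1"
    and sub: "\<And>x. w x \<le> b * (\<Sum>y\<in>UNIV. P x (jact sg x) y * w y)"
  shows "w x \<le> 0"
proof -
  define m where "m = Max (range w)"
  have le_m: "w y \<le> m" for y
    unfolding m_def by (rule Max_ge) auto
  have "m \<in> range w"
    unfolding m_def by (rule Max_in) auto
  then obtain x0 where x0: "w x0 = m"
    by auto
  have "(\<Sum>y\<in>UNIV. P x0 (jact sg x0) y * w y) \<le> (\<Sum>y\<in>UNIV. P x0 (jact sg x0) y * m)"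
    using st le_m by (intro sum_mono mult_left_mono) (auto simp: stochastic_def)
  also have "\<dots> = m"
    using st by (simp add: stochastic_def sum_distrib_right[symmetric])
  finally have "m \<le> b * m"
    using sub[of x0] x0 b(1) by (metis dual_order.trans mult_left_mono)
  then have "m \<le> 0"
    using b(2) by (metis mult_le_cancel_right1 not_le)
  then show ?thesis
    using le_m[of x] by simp
qed

definition qvalue ::
  "('i \<Rightarrow> real) \<Rightarrow> ('i \<Rightarrow> 'x \<Rightarrow> ('i \<Rightarrow> 'a) \<Rightarrow> real) \<Rightarrow> ('x::finite \<Rightarrow> ('i \<Rightarrow> 'a) \<Rightarrow> 'x \<Rightarrow> real)
     \<Rightarrow> 'i \<Rightarrow> 'x \<Rightarrow> ('i \<Rightarrow> 'a) \<Rightarrow> ('x \<Rightarrow> real) \<Rightarrow> real" where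
  "qvalue beta c P i x u v = c i x u + beta i * (\<Sum>y\<in>UNIV. P x u y * v y)"

lemma qvalue_diff:
  "qvalue beta c P i x u v - qvalue beta c P i x u v'
     = beta i * (\<Sum>y\<in>UNIV. P x u y * (v y - v' y))"
  by (simp add: qvalue_def algebra_simps sum_subtractf)

lemma jact_fun_upd: "jact (sg(i := p)) x = (jact sg x)(i := p x)"
  by (auto simp: jact_def)

lemma JPol_fun_upd: "sg \<in> JPol A \<Longrightarrow> p \<in> Pol A i \<Longrightarrow> sg(i := p) \<in> JPol A"
  by (auto simp: JPol_def)

lemma jact_in_joint_actions: "sg \<in> JPol A \<Longrightarrow> jact sg x \<in> joint_actions A"
  by (auto simp: jact_def joint_actions_def JPol_def Pol_def)

lemma stochastic_if_JPol: "is_game A beta P \<Longrightarrow> sg \<in> JPol A \<Longrightarrow> stochastic P sg"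
  unfolding stochastic_def is_game_def by (metis jact_in_joint_actions)

lemma qvalue_mono:
  assumes "is_game A beta P" and "u \<in> joint_actions A" and "\<And>y. v y \<le> v' y"
  shows "qvalue beta c P i x u v \<le> qvalue beta c P i x u v'"
proof -
  have "0 \<le> beta i" and "\<And>y. 0 \<le> P x u y"
    using assms(1,2) by (auto simp: is_game_def less_imp_le)
  then show ?thesis
    unfolding qvalue_def using assms(3) by (simp add: mult_left_mono sum_mono)
qed

lemma Jc_bellman:
  assumes g: "is_game A beta P" and s: "sg \<in> JPol A"
  shows "Jc beta c P i sg x = qvalue beta c P i x (jact sg x) (Jc beta c P i sg)"
proof -
  have "\<bar>beta i\<bar> < 1"
    using g by (simp add: is_game_def abs_less_iff) (metis less_trans neg_less_0_iff_less)
  then show ?thesis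
    using discounted_value_bellman[OF stochastic_if_JPol[OF g s]]
    by (simp add: Jc_def qvalue_def discounted_value_def[symmetric])
qed

lemma Jc_le_if_supersolution:
  assumes g: "is_game A beta P" and s: "sg \<in> JPol A"
    and super: "\<And>x. qvalue beta c P i x (jact sg x) v \<le> v x"
  shows "Jc beta c P i sg x \<le> v x"
proof -
  have "Jc beta c P i sg x - v x \<le> 0"
  proof (rule nonpos_if_discounted_subsolution[OF stochastic_if_JPol[OF g s]])
    show "0 \<le> beta i" "beta i < 1"
      using g by (auto simp: is_game_def less_imp_le)
    show "Jc beta c P i sg y - v y \<le> beta i * (\<Sum>z\<in>UNIV. P y (jact sg y) z * (Jc beta c P i sg z - v z))" for y
      using Jc_bellman[OF g s, of c i y] super[of y] qvalue_diff[of beta c P i y "jact sg y" "Jc beta c P i sg" v]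
      by linarith
  qed
  then show ?thesis by simp
qed

lemma le_Jc_if_subsolution:
  assumes g: "is_game A beta P" and s: "sg \<in> JPol A"
    and sub: "\<And>x. v x \<le> qvalue beta c P i x (jact sg x) v"
  shows "v x \<le> Jc beta c P i sg x"
proof -
  have "v x - Jc beta c P i sg x \<le> 0"
  proof (rule nonpos_if_discounted_subsolution[OF stochastic_if_JPol[OF g s]])
    show "0 \<le> beta i" "beta i < 1"
      using g by (auto simp: is_game_def less_imp_le)
    show "v y - Jc beta c P i sg y \<le> beta i * (\<Sum>z\<in>UNIV. P y (jact sg y) z * (v z - Jc beta c P i sg z))" for y
      using Jc_bellman[OF g s, of c i y] sub[of y] qvalue_diff[of beta c P i y "jact sg y" v "Jc beta c P i sg"]
      by linarith
  qed
  then show ?thesis by simp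
qed

subsection \<open>Existence of best replies\<close>

lemma best_reply_if_greedy:
  fixes sg :: "'i::finite \<Rightarrow> 'x::finite \<Rightarrow> 'a::finite"
  assumes g: "is_game A beta P" and s: "sg \<in> JPol A" and p: "p \<in> Pol A i"
    and greedy: "\<And>x a. a \<in> A i \<Longrightarrow>
       Jc beta c P i (sg(i := p)) x \<le> qvalue beta c P i x ((jact sg x)(i := a)) (Jc beta c P i (sg(i := p)))"
  shows "best_reply A beta c P i sg p"
  unfolding best_reply_def
proof (intro conjI p ballI allI)
  fix q :: "'x \<Rightarrow> 'a" and x :: 'x
  assume q: "q \<in> Pol A i"
  show "Jc beta c P i (sg(i := p)) x \<le> Jc beta c P i (sg(i := q)) x"
  proof (rule le_Jc_if_subsolution[OF g JPol_fun_upd[OF s q]])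
    fix y
    show "Jc beta c P i (sg(i := p)) y \<le> qvalue beta c P i y (jact (sg(i := q)) y) (Jc beta c P i (sg(i := p)))"
      unfolding jact_fun_upd using q by (intro greedy) (simp add: Pol_def)
  qed
qed

lemma improving_deviation:
  assumes g: "is_game A beta P" and s: "sg \<in> JPol A" and p: "p \<in> Pol A i" and a: "a \<in> A i"
    and improves: "qvalue beta c P i x0 ((jact sg x0)(i := a)) (Jc beta c P i (sg(i := p)))
                   < Jc beta c P i (sg(i := p)) x0"
  shows "Jc beta c P i (sg(i := p(x0 := a))) x \<le> Jc beta c P i (sg(i := p)) x"
    and "Jc beta c P i (sg(i := p(x0 := a))) x0 < Jc beta c P i (sg(i := p)) x0"
proof -
  define J where "J = Jc beta c P i (sg(i := p))"
  define J' where "J' = Jc beta c P i (sg(i := p(x0 := a)))"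
  have s': "sg(i := p(x0 := a)) \<in> JPol A"
    using p a by (intro JPol_fun_upd[OF s]) (auto simp: Pol_def)
  have super: "qvalue beta c P i z (jact (sg(i := p(x0 := a))) z) J \<le> J z" for z
  proof (cases "z = x0")
    case True
    then show ?thesis
      using improves by (simp add: jact_fun_upd J_def)
  next
    case False
    then show ?thesis
      using Jc_bellman[OF g JPol_fun_upd[OF s p], of c i z] by (simp add: jact_fun_upd J_def)
  qed
  then have le: "J' z \<le> J z" for z
    unfolding J'_def by (rule Jc_le_if_supersolution[OF g s'])
  then show "J' x \<le> J x" .
  have "J' x0 = qvalue beta c P i x0 (jact (sg(i := p(x0 := a))) x0) J'"
    unfolding J'_def by (rule Jc_bellman[OF g s'])
  also have "\<dots> \<le> qvalue beta c P i x0 (jact (sg(i := p(x0 := a))) x0) J"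
    by (rule qvalue_mono[OF g jact_in_joint_actions[OF s'] le])
  also have "\<dots> < J x0"
    using improves by (simp add: jact_fun_upd J_def)
  finally show "J' x0 < J x0" .
qed

text \<open>A policy minimising the total value \<open>\<Sum>\<^sub>x J\<^sub>x\<close> admits no improving deviation, hence is greedy.\<close>
lemma exists_best_reply:
  fixes A :: "'i::finite \<Rightarrow> 'a::finite set" and P :: "'x::finite \<Rightarrow> ('i \<Rightarrow> 'a) \<Rightarrow> 'x \<Rightarrow> real"
  assumes g: "is_game A beta P" and s: "sg \<in> JPol A"
  shows "\<exists>p. best_reply A beta c P i sg p"
proof -
  define S where "S q = (\<Sum>x\<in>UNIV. Jc beta c P i (sg(i := q)) x)" for q
  have "(\<lambda>_. SOME a. a \<in> A i) \<in> (Pol A i :: ('x \<Rightarrow> 'a) set)"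
    using g by (auto simp: Pol_def is_game_def some_in_eq)
  then obtain p where p: "p \<in> Pol A i" and p_min: "\<And>q. q \<in> Pol A i \<Longrightarrow> S p \<le> S q"
    using arg_min_if_finite[of "Pol A i" S] finite[of "Pol A i"]
    by (metis empty_iff not_le)
  have "Jc beta c P i (sg(i := p)) x \<le> qvalue beta c P i x ((jact sg x)(i := a)) (Jc beta c P i (sg(i := p)))"
    if a: "a \<in> A i" for x a
  proof (rule ccontr)
    assume "\<not> ?thesis"
    then have "S (p(x := a)) < S p"
      unfolding S_def using improving_deviation[OF g s p a, of c x]
      by (intro sum_strict_mono_ex1) (auto simp: not_le)
    moreover have "p(x := a) \<in> Pol A i"
      using p a by (auto simp: Pol_def)
    ultimately show False
      using p_min by fastforce
  qed
  then show ?thesis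
    using best_reply_if_greedy[OF g s p] by blast
qed

lemma strict_best_reply_if_not_best_reply:
  assumes g: "is_game A beta P" and s: "sg \<in> JPol A" and not_br: "\<not> best_reply A beta c P i sg (sg i)"
  obtains p where "strict_best_reply A beta c P i sg p"
proof -
  obtain p where p: "best_reply A beta c P i sg p"
    using exists_best_reply[OF g s] by blast
  obtain q x where "q \<in> Pol A i" and "Jc beta c P i (sg(i := q)) x < Jc beta c P i sg x"
    using not_br s by (auto simp: best_reply_def JPol_def not_le)
  moreover have "Jc beta c P i (sg(i := p)) x \<le> Jc beta c P i (sg(i := q)) x"
    using p \<open>q \<in> Pol A i\<close> by (simp add: best_reply_def)
  ultimately have "Jc beta c P i (sg(i := p)) x < Jc beta c P i sg x"
    by linarith
  then show ?thesis
    using p that by (auto simp: strict_best_reply_def)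
qed

lemma not_strict_best_reply_if_best_reply:
  "best_reply A beta c P i sg (sg i) \<Longrightarrow> \<not> strict_best_reply A beta c P i sg p"
  unfolding strict_best_reply_def best_reply_def by (metis fun_upd_triv not_less)

lemma min_cumber_singleton_iff:
  "sg \<in> JPol A \<Longrightarrow> min_cumber A beta c P {sg} \<longleftrightarrow> BRt A beta c P sg \<subseteq> {sg}"
  by (auto simp: min_cumber_def cumber_def)

lemma Peq_iff_BRt_subset:
  assumes g: "is_game A beta P" and s: "sg \<in> JPol A"
  shows "sg \<in> Peq A beta c P \<longleftrightarrow> BRt A beta c P sg \<subseteq> {sg}"
proof
  assume "sg \<in> Peq A beta c P"
  then show "BRt A beta c P sg \<subseteq> {sg}"
    using not_strict_best_reply_if_best_reply by (fastforce simp: Peq_def BRt_def)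
next
  assume BRt_sub: "BRt A beta c P sg \<subseteq> {sg}"
  have "best_reply A beta c P i sg (sg i)" for i
  proof (rule ccontr)
    assume "\<not> best_reply A beta c P i sg (sg i)"
    then obtain p where p: "strict_best_reply A beta c P i sg p"
      using strict_best_reply_if_not_best_reply[OF g s] by blast
    then have "p \<noteq> sg i"
      by (auto simp: strict_best_reply_def)
    moreover have "sg(i := p) \<in> BRt A beta c P sg"
      using p s by (auto simp: BRt_def JPol_def strict_best_reply_def best_reply_def)
    ultimately show False
      using BRt_sub by (metis fun_upd_same singletonD subsetD)
  qed
  then show "sg \<in> Peq A beta c P"
    using s by (simp add: Peq_def)
qed

subsection \<open>Reaching a minimal \<open>\<Lambda>\<close>-cumber set\<close>

definition BRt_L_step ::
  "('i \<Rightarrow> 'a set) \<Rightarrow> ('i \<Rightarrow> real) \<Rightarrow> ('i \<Rightarrow> 'x \<Rightarrow> ('i \<Rightarrow> 'a) \<Rightarrow> real)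
     \<Rightarrow> ('x::finite \<Rightarrow> ('i \<Rightarrow> 'a) \<Rightarrow> 'x \<Rightarrow> real) \<Rightarrow> ('i \<Rightarrow> real)
     \<Rightarrow> (('i \<Rightarrow> 'x \<Rightarrow> 'a) \<times> ('i \<Rightarrow> 'x \<Rightarrow> 'a)) set" where
  "BRt_L_step A beta c P L = {(sg, sg'). sg \<in> JPol A \<and> sg' \<in> BRt_L A beta c P L sg}"

lemma L_cumber_reachable:
  assumes s: "sg \<in> JPol A"
  shows "L_cumber A beta c P L ((BRt_L_step A beta c P L)\<^sup>* `` {sg})"
proof -
  let ?R = "(BRt_L_step A beta c P L)\<^sup>* `` {sg}"
  have "?R \<subseteq> JPol A"
  proof
    fix t assume "t \<in> ?R"
    then have "(sg, t) \<in> (BRt_L_step A beta c P L)\<^sup>*" by simp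
    then show "t \<in> JPol A"
      using s by (induction rule: rtrancl_induct) (auto simp: BRt_L_step_def BRt_L_def)
  qed
  then show ?thesis
    by (fastforce simp: L_cumber_def BRt_L_step_def intro: rtrancl_into_rtrancl)
qed

lemma ex_min_L_cumber_subset:
  fixes T :: "('i::finite \<Rightarrow> 'x::finite \<Rightarrow> 'a::finite) set"
  assumes "L_cumber A beta c P L T"
  obtains T' where "T' \<subseteq> T" and "min_L_cumber A beta c P L T'"
proof -
  obtain T' where T': "T' \<subseteq> T \<and> L_cumber A beta c P L T'"
    and least: "\<And>T''. T'' \<subseteq> T \<and> L_cumber A beta c P L T'' \<Longrightarrow> card T' \<le> card T''"
    using ex_has_least_nat[of "\<lambda>T'. T' \<subseteq> T \<and> L_cumber A beta c P L T'" T card] assms by blast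
  have "min_L_cumber A beta c P L T'"
    unfolding min_L_cumber_def
  proof (intro conjI notI)
    show "L_cumber A beta c P L T'"
      using T' by simp
  next
    assume "\<exists>T''. T'' \<subset> T' \<and> L_cumber A beta c P L T''"
    then obtain T'' where "T'' \<subset> T'" and "L_cumber A beta c P L T''"
      by blast
    then show False
      using T' least[of T''] psubset_card_mono[of T' T''] by auto
  qed
  then show ?thesis
    using T' that by blast
qed

lemma sbr_path_if_reachable:
  assumes "(sg, sg') \<in> (BRt_L_step A beta c P L)\<^sup>*" and "sg \<in> JPol A"
  shows "\<exists>ps. sbr_path A beta c P ps \<and> hd ps = sg \<and> last ps = sg'"
  using assms
proof (induction rule: converse_rtrancl_induct)
  case base
  then show ?case
    by (intro exI[of _ "[sg']"]) (simp add: sbr_path_def)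
next
  case (step y z)
  then have z: "z \<in> BRt_L A beta c P L y" and "z \<in> JPol A"
    by (auto simp: BRt_L_step_def BRt_L_def)
  then obtain ps where ps: "sbr_path A beta c P ps" "hd ps = z" "last ps = sg'"
    using step.IH by blast
  show ?case
  proof (cases "z = y")
    case True
    then show ?thesis using ps by blast
  next
    case False
    have "z \<in> BRt A beta c P y"
      using z by (auto simp: BRt_L_def BRt_def)
    then have "sbr_path A beta c P (y # ps)"
      using ps step.prems False
      by (auto simp: sbr_path_def nth_Cons hd_conv_nth split: nat.split)
    then show ?thesis
      using ps by (intro exI[of _ "y # ps"]) (simp add: sbr_path_def)
  qed
qed

theorem mainTheorem6:
  fixes A :: "'i::finite \<Rightarrow> 'a::finite set"
    and beta :: "'i \<Rightarrow> real"
    and c :: "'i \<Rightarrow> 'x::finite \<Rightarrow> ('i \<Rightarrow> 'a) \<Rightarrow> real"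
    and P :: "'x \<Rightarrow> ('i \<Rightarrow> 'a) \<Rightarrow> 'x \<Rightarrow> real"
    and L :: "'i \<Rightarrow> real"
  assumes "is_game A beta P"
  shows "(\<forall>sg\<in>JPol A. sg \<in> Peq A beta c P \<longleftrightarrow> min_cumber A beta c P {sg})
       \<and> (\<forall>sg\<in>JPol A - Pcumber_L A beta c P L.
            \<exists>ps. sbr_path A beta c P ps \<and> hd ps = sg \<and> last ps \<in> Pcumber_L A beta c P L)"
proof (intro conjI ballI)
  fix sg :: "'i \<Rightarrow> 'x \<Rightarrow> 'a"
  assume "sg \<in> JPol A"
  then show "sg \<in> Peq A beta c P \<longleftrightarrow> min_cumber A beta c P {sg}"
    using Peq_iff_BRt_subset[OF assms] min_cumber_singleton_iff by blast
next
  fix sg :: "'i \<Rightarrow> 'x \<Rightarrow> 'a"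
  assume "sg \<in> JPol A - Pcumber_L A beta c P L"
  then have s: "sg \<in> JPol A" by simp
  obtain T where T: "T \<subseteq> (BRt_L_step A beta c P L)\<^sup>* `` {sg}" "min_L_cumber A beta c P L T"
    using ex_min_L_cumber_subset[OF L_cumber_reachable[OF s]] by blast
  then obtain t where "t \<in> T"
    by (auto simp: min_L_cumber_def L_cumber_def)
  moreover have "T \<subseteq> Pcumber_L A beta c P L"
    using T(2) by (auto simp: Pcumber_L_def)
  ultimately show "\<exists>ps. sbr_path A beta c P ps \<and> hd ps = sg \<and> last ps \<in> Pcumber_L A beta c P L"
    using sbr_path_if_reachable[OF _ s, of t] T(1) by blast
qed

end
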